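(* Let $f_1,f_2:\mathbb R^d\to\mathbb R$ be convex with $\nabla f_i$ globally Lipschitz continuous with modulus $L_i>0$ ($i=1,2$), let $f_3:\mathbb R^d\to\mathbb R\cup\{+\infty\}$ be proper and lower semicontinuous, and assume $\varphi:=f_1+f_2+f_3$ has a nonempty set of minimizers. Let $\gamma\in(0,\frac{1}{L_1+L_2})$ and $\lambda,\alpha>0$. Given $(z_1,z_2)\in\mathbb R^d\times\mathbb R^d$, let $x_1=\mathrm{prox}_{\gamma f_1}(z_1)$, $x_2=\mathrm{prox}_{\frac{\gamma}{\alpha}f_2}(\frac{z_2}{\alpha}+x_1)$ and $x_3\in\mathrm{prox}_{\gamma f_3}(x_1-z_1+x_2-z_2)$. Then: (i) with $\gamma_1=\gamma/\alpha$ and $\gamma_2=\gamma/(1-\alpha)$, $$\varphi_\gamma^{\mathrm{Ryu}}(z_1,z_2)\le\min\Big\{\varphi(x_1)+\tfrac12\big(L_2+\tfrac{1}{\gamma_2}\big)\|x_1-x_2\|^2,\ \varphi(x_2)+\tfrac12\big(L_1+\tfrac{1}{\gamma_1}\big)\|x_1-x_2\|^2\Big\};$$ (ii) $\varphi_\gamma^{\mathrm{Ryu}}(z_1,z_2)\ge\varphi(x_3)+\frac{\alpha-\gamma L_1}{2\gamma}\|x_3-x_1\|^2+\frac{(1-\alpha)-\gamma L_2}{2\gamma}\|x_3-x_2\|^2$; (iii) if $\alpha\in(0,1)$ and $\gamma\le\min\{\frac{\alpha}{L_1},\frac{1-\alpha}{L_2}\}$, then $\varphi_\gamma^{\mathr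m{Ryu}}(z_1,z_2)\ge\varphi(x_3)$.
   Context: For $h:\mathbb R^d\to\mathbb R\cup\{+\infty\}$ and $\gamma>0$, $\mathrm{prox}_{\gamma h}(z):=\operatorname{argmin}_{y}\{h(y)+\frac{1}{2\gamma}\|y-z\|^2\}$. Conventions $\frac{c}{0}=\infty$, $\frac{d}{\infty}=0$ ($c>0,d\in\mathbb R$). With $x_1,x_2$ as in the claim and $\gamma_1=\gamma/\alpha$, $\gamma_2=\gamma/(1-\alpha)$, the relaxed Ryu envelope is $$\varphi_\gamma^{\mathrm{Ryu}}(z_1,z_2):=\min_{y\in\mathbb R^d}\Big\{f_3(y)+\sum_{i=1}^2\Big[f_i(x_i)+\langle y-x_i,\nabla f_i(x_i)\rangle+\frac{1}{2\gamma_i}\|y-x_i\|^2\Big]\Big\}.$$ *)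

theory Defs
  imports "HOL-Analysis.Analysis" "HOL-Library.Extended_Real"
begin

definition proper_fun :: "('a \<Rightarrow> ereal) \<Rightarrow> bool" where
  "proper_fun h \<longleftrightarrow> (\<exists>x. h x \<noteq> \<infinity>) \<and> (\<forall>x. h x \<noteq> -\<infinity>)"

definition lsc_fun :: "('a::topological_space \<Rightarrow> ereal) \<Rightarrow> bool" where
  "lsc_fun h \<longleftrightarrow> (\<forall>x. h x \<le> Liminf (at x) h)"

definition prox_set :: "('a::real_normed_vector \<Rightarrow> ereal) \<Rightarrow> real \<Rightarrow> 'a \<Rightarrow> 'a set" where
  "prox_set h \<gamma> z = {y. \<forall>u. h y + ereal ((norm (y - z))\<^sup>2 / (2 * \<gamma>))
                            \<le> h u + ereal ((norm (u - z))\<^sup>2 / (2 * \<gamma>))}"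

text \<open>Relaxed Ryu envelope evaluated with given points \<open>x1, x2\<close> and gradients \<open>g1, g2\<close>.
  Here \<open>1/\<gamma>1 = \<alpha>/\<gamma>\<close> and \<open>1/\<gamma>2 = (1-\<alpha>)/\<gamma>\<close> (consistent with the conventions c/0 = \<infinity>, d/\<infinity> = 0).
  The minimum is rendered as an infimum in ereal.\<close>
definition ryu_env ::
  "('a::real_inner \<Rightarrow> real) \<Rightarrow> ('a \<Rightarrow> real) \<Rightarrow> ('a \<Rightarrow> ereal) \<Rightarrow> ('a \<Rightarrow> 'a) \<Rightarrow> ('a \<Rightarrow> 'a)
    \<Rightarrow> real \<Rightarrow> real \<Rightarrow> 'a \<Rightarrow> 'a \<Rightarrow> ereal" where
  "ryu_env f1 f2 f3 g1 g2 \<gamma> \<alpha> x1 x2 =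
     (INF y. f3 y
        + ereal (f1 x1 + (y - x1) \<bullet> g1 x1 + (\<alpha> / \<gamma>) / 2 * (norm (y - x1))\<^sup>2)
        + ereal (f2 x2 + (y - x2) \<bullet> g2 x2 + ((1 - \<alpha>) / \<gamma>) / 2 * (norm (y - x2))\<^sup>2))"

end

theory Submission
  imports Defs
begin

text \<open>The first-order optimality conditions of the proximal steps defining \<open>x1\<close> and \<open>x2\<close>
  express the gradients \<open>g1 x1\<close>, \<open>g2 x2\<close> through \<open>z1\<close>, \<open>z2\<close>. With these, the sum of the
  two quadratic models inside the Ryu envelope has curvature \<open>\<alpha>/\<gamma> + (1-\<alpha>)/\<gamma> = 1/\<gamma>\<close> and is
  stationary at \<open>c = x1 - z1 + x2 - z2\<close>, so it equals a constant plus \<open>\<parallel>y - c\<parallel>\<^sup>2/(2\<gamma>)\<close>.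
  Hence the infimum defining the envelope is attained at \<open>x3 \<in> prox_{\<gamma> f3}(c)\<close>.
  Evaluating the models at \<open>y = x1\<close> and \<open>y = x2\<close> and using the gradient inequality of the
  convex \<open>f1\<close>, \<open>f2\<close> gives (i); bounding the models at \<open>x3\<close> from below by the descent lemma
  for Lipschitz gradients gives (ii), and (iii) follows since the quadratic terms in (ii) are then
  nonnegative. Properness and lower semicontinuity of \<open>f3\<close>, the existence of a minimiser and the
  bound \<open>\<gamma> < 1/(L1 + L2)\<close> only serve to guarantee that the prox points exist.\<close>

lemma has_real_derivative_along_line:
  fixes f :: "'a::real_inner \<Rightarrow> real"
  assumes "\<And>x. (f has_derivative (\<lambda>h. g x \<bullet> h)) (at x)"
  shows "((\<lambda>t. f (x + t *\<^sub>R d)) has_real_derivative (g (x + t *\<^sub>R d) \<bullet> d)) (at t)"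
proof -
  have "((\<lambda>t. x + t *\<^sub>R d) has_derivative (\<lambda>s. s *\<^sub>R d)) (at t)"
    by (auto intro!: derivative_eq_intros)
  from has_derivative_compose[OF this assms]
  show ?thesis
    unfolding has_field_derivative_def by (rule has_derivative_eq_rhs) (simp add: fun_eq_iff)
qed

lemma convex_on_along_line:
  assumes "convex_on UNIV f"
  shows "convex_on UNIV (\<lambda>t::real. f (x + t *\<^sub>R d))"
proof (rule convex_onI)
  fix t u v :: real
  assume "0 < t" "t < 1"
  moreover have "x + ((1 - t) *\<^sub>R u + t *\<^sub>R v) *\<^sub>R d = (1 - t) *\<^sub>R (x + u *\<^sub>R d) + t *\<^sub>R (x + v *\<^sub>R d)"
    by (simp add: algebra_simps)
  ultimately show "f (x + ((1 - t) *\<^sub>R u + t *\<^sub>R v) *\<^sub>R d) \<le> (1 - t) * f (x + u *\<^sub>R d) + t * f (x + v *\<^sub>R d)"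
    using convex_onD[OF assms, of t "x + u *\<^sub>R d" "x + v *\<^sub>R d"] by simp
qed simp

lemma convex_on_gradient_inequality:
  fixes f :: "'a::real_inner \<Rightarrow> real"
  assumes "\<And>x. (f has_derivative (\<lambda>h. g x \<bullet> h)) (at x)" and "convex_on UNIV f"
  shows "f x + (y - x) \<bullet> g x \<le> f y"
proof -
  have "((\<lambda>t. f (x + t *\<^sub>R (y - x))) has_real_derivative g x \<bullet> (y - x)) (at 0)"
    using has_real_derivative_along_line[OF assms(1), of x "y - x" 0] by simp
  then have "f (x + 1 *\<^sub>R (y - x)) - f (x + 0 *\<^sub>R (y - x)) \<ge> g x \<bullet> (y - x) * (1 - 0)"
    by (intro convex_on_imp_above_tangent[OF convex_on_along_line[OF assms(2)]])
      (auto simp: has_field_derivative_at_within)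
  then show ?thesis
    by (simp add: inner_commute)
qed

lemma prox_set_gradient:
  fixes f :: "'a::real_inner \<Rightarrow> real"
  assumes deriv: "\<And>x. (f has_derivative (\<lambda>h. g x \<bullet> h)) (at x)"
    and "t > 0" and "x \<in> prox_set (\<lambda>x. ereal (f x)) t z"
  shows "g x = (1 / t) *\<^sub>R (z - x)"
proof -
  define h where "h y = f y + ((y - z) \<bullet> (y - z)) / (2 * t)" for y
  define v where "v = g x + (1 / t) *\<^sub>R (x - z)"
  have "\<forall>y\<in>UNIV. h x \<le> h y"
    using assms(3) by (simp add: h_def prox_set_def power2_norm_eq_inner)
  moreover have "(h has_derivative (\<lambda>u. v \<bullet> u)) (at x)"
    unfolding h_def v_def using \<open>t > 0\<close>
    by (auto intro!: derivative_eq_intros deriv simp: fun_eq_iff inner_add_right inner_diff_right inner_commute field_simps)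
  ultimately have "(\<lambda>u. v \<bullet> u) = (\<lambda>u. 0)"
    by (intro differential_zero_maxmin[of x UNIV]) auto
  then have "v = 0"
    by (metis inner_eq_zero_iff)
  then show ?thesis
    by (simp add: v_def scaleR_diff_right add_diff_eq eq_diff_eq)
qed

definition quadratic_model ::
    "('a::real_inner \<Rightarrow> real) \<Rightarrow> ('a \<Rightarrow> 'a) \<Rightarrow> real \<Rightarrow> 'a \<Rightarrow> 'a \<Rightarrow> real" where
  "quadratic_model f g \<mu> x y = f x + (y - x) \<bullet> g x + \<mu> / 2 * (norm (y - x))\<^sup>2"

lemma quadratic_model_self [simp]: "quadratic_model f g \<mu> x x = f x"
  by (simp add: quadratic_model_def)

lemma quadratic_model_add_curvature:
  "quadratic_model f g (\<mu> + \<nu>) x y = quadratic_model f g \<mu> x y + \<nu> / 2 * (norm (y - x))\<^sup>2"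
  by (simp add: quadratic_model_def algebra_simps)

lemma quadratic_model_recenter:
  "quadratic_model f g \<mu> x y
     = quadratic_model f g \<mu> x c + (y - c) \<bullet> (g x + \<mu> *\<^sub>R (c - x)) + \<mu> / 2 * (norm (y - c))\<^sup>2"
  unfolding quadratic_model_def power2_norm_eq_inner
  by (simp add: inner_diff_left inner_diff_right inner_commute algebra_simps)

lemma quadratic_model_sum_recenter:
  assumes "g1 x1 + g2 x2 + \<mu>1 *\<^sub>R (c - x1) + \<mu>2 *\<^sub>R (c - x2) = 0"
  shows "quadratic_model f1 g1 \<mu>1 x1 y + quadratic_model f2 g2 \<mu>2 x2 y
       = quadratic_model f1 g1 \<mu>1 x1 c + quadratic_model f2 g2 \<mu>2 x2 c + (\<mu>1 + \<mu>2) / 2 * (norm (y - c))\<^sup>2"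
proof -
  have "(y - c) \<bullet> (g1 x1 + \<mu>1 *\<^sub>R (c - x1)) + (y - c) \<bullet> (g2 x2 + \<mu>2 *\<^sub>R (c - x2)) = 0"
    using assms by (simp flip: inner_add_right add: ac_simps)
  then show ?thesis
    using quadratic_model_recenter[of f1 g1 \<mu>1 x1 y c] quadratic_model_recenter[of f2 g2 \<mu>2 x2 y c]
    by (simp add: add_divide_distrib distrib_right)
qed

lemma quadratic_model_le_convex:
  fixes f :: "'a::real_inner \<Rightarrow> real"
  assumes "\<And>x. (f has_derivative (\<lambda>h. g x \<bullet> h)) (at x)" and "convex_on UNIV f"
  shows "quadratic_model f g \<mu> x y \<le> f y + \<mu> / 2 * (norm (y - x))\<^sup>2"
  using convex_on_gradient_inequality[OF assms, of x y] by (simp add: quadratic_model_def)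

lemma lipschitz_gradient_le_quadratic_model:
  fixes f :: "'a::real_inner \<Rightarrow> real"
  assumes deriv: "\<And>x. (f has_derivative (\<lambda>h. g x \<bullet> h)) (at x)"
    and lip: "L-lipschitz_on UNIV g"
  shows "f y \<le> quadratic_model f g L x y"
proof -
  define d where "d = y - x"
  define \<phi> where "\<phi> t = f (x + t *\<^sub>R d) - t * (g x \<bullet> d) - L / 2 * t\<^sup>2 * (norm d)\<^sup>2" for t
  have "\<phi> 1 \<le> \<phi> 0"
  proof (rule DERIV_nonpos_imp_nonincreasing[where f = \<phi>])
    fix t :: real
    assume t: "0 \<le> t" "t \<le> 1"
    have "(g (x + t *\<^sub>R d) - g x) \<bullet> d \<le> norm (g (x + t *\<^sub>R d) - g x) * norm d"
      by (rule norm_cauchy_schwarz)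
    also have "\<dots> \<le> L * dist (x + t *\<^sub>R d) x * norm d"
      using lipschitz_onD[OF lip] by (simp add: mult_right_mono flip: dist_norm)
    also have "\<dots> = L * t * (norm d)\<^sup>2"
      using t by (simp add: dist_norm power2_eq_square)
    finally have "g (x + t *\<^sub>R d) \<bullet> d - g x \<bullet> d - L / 2 * (2 * t) * (norm d)\<^sup>2 \<le> 0"
      by (simp add: inner_diff_left)
    moreover have "(\<phi> has_real_derivative
        (g (x + t *\<^sub>R d) \<bullet> d - g x \<bullet> d - L / 2 * (2 * t) * (norm d)\<^sup>2)) (at t)"
      unfolding \<phi>_def by (auto intro!: derivative_eq_intros has_real_derivative_along_line[OF deriv])
    ultimately show "\<exists>D. (\<phi> has_real_derivative D) (at t) \<and> D \<le> 0"
      by blast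
  qed simp
  then show ?thesis
    by (simp add: \<phi>_def d_def quadratic_model_def inner_commute)
qed

lemma lipschitz_gradient_quadratic_model_lower:
  fixes f :: "'a::real_inner \<Rightarrow> real"
  assumes "\<And>x. (f has_derivative (\<lambda>h. g x \<bullet> h)) (at x)" and "L-lipschitz_on UNIV g"
  shows "f y + (\<mu> - L) / 2 * (norm (y - x))\<^sup>2 \<le> quadratic_model f g \<mu> x y"
  using lipschitz_gradient_le_quadratic_model[OF assms, of y x] quadratic_model_add_curvature[of f g L "\<mu> - L" x y]
  by simp

lemma INF_plus_quadratic_attained_at_prox:
  fixes q :: "'a::real_normed_vector \<Rightarrow> real"
  assumes "x \<in> prox_set h \<gamma> c" and "\<And>y. q y = q c + (norm (y - c))\<^sup>2 / (2 * \<gamma>)"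
  shows "(INF y. h y + ereal (q y)) = h x + ereal (q x)"
proof (rule antisym)
  show "h x + ereal (q x) \<le> (INF y. h y + ereal (q y))"
  proof (rule INF_greatest)
    fix y
    have "h x + ereal ((norm (x - c))\<^sup>2 / (2 * \<gamma>)) + ereal (q c)
        \<le> h y + ereal ((norm (y - c))\<^sup>2 / (2 * \<gamma>)) + ereal (q c)"
      using assms(1) by (intro add_right_mono) (simp add: prox_set_def)
    then show "h x + ereal (q x) \<le> h y + ereal (q y)"
      by (simp add: assms(2)[of x] assms(2)[of y] ac_simps)
  qed
qed (rule INF_lower, simp)

lemma ryu_env_eq_INF_quadratic_models:
  "ryu_env f1 f2 f3 g1 g2 \<gamma> \<alpha> x1 x2
     = (INF y. f3 y + ereal (quadratic_model f1 g1 (\<alpha> / \<gamma>) x1 y + quadratic_model f2 g2 ((1 - \<alpha>) / \<gamma>) x2 y))"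
  unfolding ryu_env_def quadratic_model_def by (simp add: add.assoc)

lemma ryu_env_le_at:
  assumes "quadratic_model f1 g1 (\<alpha> / \<gamma>) x1 y + quadratic_model f2 g2 ((1 - \<alpha>) / \<gamma>) x2 y \<le> a + r"
  shows "ryu_env f1 f2 f3 g1 g2 \<gamma> \<alpha> x1 x2 \<le> ereal a + f3 y + ereal r"
proof -
  have "ryu_env f1 f2 f3 g1 g2 \<gamma> \<alpha> x1 x2
      \<le> f3 y + ereal (quadratic_model f1 g1 (\<alpha> / \<gamma>) x1 y + quadratic_model f2 g2 ((1 - \<alpha>) / \<gamma>) x2 y)"
    unfolding ryu_env_eq_INF_quadratic_models by (rule INF_lower) simp
  also have "\<dots> \<le> f3 y + ereal (a + r)"
    using assms by (intro add_left_mono) simp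
  also have "\<dots> = ereal a + f3 y + ereal r"
    by (cases "f3 y") (simp_all add: ac_simps)
  finally show ?thesis .
qed

lemma ryu_env_le_at_first_point:
  fixes f2 :: "'a::real_inner \<Rightarrow> real"
  assumes "\<And>x. (f2 has_derivative (\<lambda>h. g2 x \<bullet> h)) (at x)" and "convex_on UNIV f2"
  shows "ryu_env f1 f2 f3 g1 g2 \<gamma> \<alpha> x1 x2
    \<le> ereal (f1 x1 + f2 x1) + f3 x1 + ereal ((1 - \<alpha>) / \<gamma> / 2 * (norm (x1 - x2))\<^sup>2)"
  using quadratic_model_le_convex[OF assms, of "(1 - \<alpha>) / \<gamma>" x2 x1]
  by (intro ryu_env_le_at) (simp add: norm_minus_commute)

lemma ryu_env_le_at_second_point:
  fixes f1 :: "'a::real_inner \<Rightarrow> real"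
  assumes "\<And>x. (f1 has_derivative (\<lambda>h. g1 x \<bullet> h)) (at x)" and "convex_on UNIV f1"
  shows "ryu_env f1 f2 f3 g1 g2 \<gamma> \<alpha> x1 x2
    \<le> ereal (f1 x2 + f2 x2) + f3 x2 + ereal (\<alpha> / \<gamma> / 2 * (norm (x1 - x2))\<^sup>2)"
  using quadratic_model_le_convex[OF assms, of "\<alpha> / \<gamma>" x1 x2]
  by (intro ryu_env_le_at) (simp add: norm_minus_commute)

lemma ryu_env_attained_at_prox:
  fixes f1 f2 :: "'a::real_inner \<Rightarrow> real"
  assumes g1_grad: "\<And>x. (f1 has_derivative (\<lambda>h. g1 x \<bullet> h)) (at x)"
    and g2_grad: "\<And>x. (f2 has_derivative (\<lambda>h. g2 x \<bullet> h)) (at x)"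
    and "\<gamma> > 0" and "\<alpha> > 0"
    and x1: "x1 \<in> prox_set (\<lambda>x. ereal (f1 x)) \<gamma> z1"
    and x2: "x2 \<in> prox_set (\<lambda>x. ereal (f2 x)) (\<gamma> / \<alpha>) (z2 /\<^sub>R \<alpha> + x1)"
    and x3: "x3 \<in> prox_set f3 \<gamma> (x1 - z1 + x2 - z2)"
  shows "ryu_env f1 f2 f3 g1 g2 \<gamma> \<alpha> x1 x2
    = f3 x3 + ereal (quadratic_model f1 g1 (\<alpha> / \<gamma>) x1 x3 + quadratic_model f2 g2 ((1 - \<alpha>) / \<gamma>) x2 x3)"
proof -
  define c where "c = x1 - z1 + x2 - z2"
  define M where "M y = quadratic_model f1 g1 (\<alpha> / \<gamma>) x1 y + quadratic_model f2 g2 ((1 - \<alpha>) / \<gamma>) x2 y" for y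
  have "g1 x1 = (1 / \<gamma>) *\<^sub>R (z1 - x1)"
    by (rule prox_set_gradient[OF g1_grad \<open>\<gamma> > 0\<close> x1])
  moreover have "g2 x2 = (\<alpha> / \<gamma>) *\<^sub>R (z2 /\<^sub>R \<alpha> + x1 - x2)"
    using prox_set_gradient[OF g2_grad _ x2] \<open>\<gamma> > 0\<close> \<open>\<alpha> > 0\<close> by simp
  ultimately have "\<gamma> *\<^sub>R (g1 x1 + g2 x2 + (\<alpha> / \<gamma>) *\<^sub>R (c - x1) + ((1 - \<alpha>) / \<gamma>) *\<^sub>R (c - x2)) = 0"
    using \<open>\<gamma> > 0\<close> \<open>\<alpha> > 0\<close> by (simp add: c_def algebra_simps diff_divide_distrib)
  then have stationary: "g1 x1 + g2 x2 + (\<alpha> / \<gamma>) *\<^sub>R (c - x1) + ((1 - \<alpha>) / \<gamma>) *\<^sub>R (c - x2) = 0"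
    using \<open>\<gamma> > 0\<close> by simp
  have curvature: "(\<alpha> / \<gamma> + (1 - \<alpha>) / \<gamma>) / 2 = 1 / (2 * \<gamma>)"
    by (simp add: add_divide_distrib[symmetric])
  have "M y = M c + (norm (y - c))\<^sup>2 / (2 * \<gamma>)" for y
    using quadratic_model_sum_recenter[of g1 x1 g2 x2, OF stationary, of f1 y f2] by (simp add: M_def curvature)
  then have "(INF y. f3 y + ereal (M y)) = f3 x3 + ereal (M x3)"
    by (rule INF_plus_quadratic_attained_at_prox[OF x3[folded c_def]])
  then show ?thesis
    by (simp add: ryu_env_eq_INF_quadratic_models M_def)
qed

lemma ryu_env_ge_at_prox:
  fixes f1 f2 :: "'a::real_inner \<Rightarrow> real"
  assumes g1_grad: "\<And>x. (f1 has_derivative (\<lambda>h. g1 x \<bullet> h)) (at x)"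
    and g2_grad: "\<And>x. (f2 has_derivative (\<lambda>h. g2 x \<bullet> h)) (at x)"
    and g1_lip: "L1-lipschitz_on UNIV g1" and g2_lip: "L2-lipschitz_on UNIV g2"
    and "\<gamma> > 0" and "\<alpha> > 0"
    and "x1 \<in> prox_set (\<lambda>x. ereal (f1 x)) \<gamma> z1"
    and "x2 \<in> prox_set (\<lambda>x. ereal (f2 x)) (\<gamma> / \<alpha>) (z2 /\<^sub>R \<alpha> + x1)"
    and "x3 \<in> prox_set f3 \<gamma> (x1 - z1 + x2 - z2)"
  shows "ereal (f1 x3 + f2 x3) + f3 x3
      + ereal ((\<alpha> / \<gamma> - L1) / 2 * (norm (x3 - x1))\<^sup>2 + ((1 - \<alpha>) / \<gamma> - L2) / 2 * (norm (x3 - x2))\<^sup>2)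
    \<le> ryu_env f1 f2 f3 g1 g2 \<gamma> \<alpha> x1 x2"
proof -
  have "f1 x3 + f2 x3 + ((\<alpha> / \<gamma> - L1) / 2 * (norm (x3 - x1))\<^sup>2 + ((1 - \<alpha>) / \<gamma> - L2) / 2 * (norm (x3 - x2))\<^sup>2)
      \<le> quadratic_model f1 g1 (\<alpha> / \<gamma>) x1 x3 + quadratic_model f2 g2 ((1 - \<alpha>) / \<gamma>) x2 x3"
    using lipschitz_gradient_quadratic_model_lower[OF g1_grad g1_lip, of x3 "\<alpha> / \<gamma>" x1]
      lipschitz_gradient_quadratic_model_lower[OF g2_grad g2_lip, of x3 "(1 - \<alpha>) / \<gamma>" x2]
    by linarith
  then show ?thesis
    unfolding ryu_env_attained_at_prox[OF g1_grad g2_grad assms(5-9)]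
    by (cases "f3 x3") (simp_all add: ac_simps)
qed

theorem proposition3:
  fixes f1 f2 :: "'a::euclidean_space \<Rightarrow> real"
    and g1 g2 :: "'a \<Rightarrow> 'a"
    and f3 :: "'a \<Rightarrow> ereal"
    and L1 L2 \<gamma> \<alpha> :: real
    and z1 z2 x1 x2 x3 :: 'a
  assumes f1_convex: "convex_on UNIV f1" and f2_convex: "convex_on UNIV f2"
    and g1_grad: "\<And>x. (f1 has_derivative (\<lambda>h. g1 x \<bullet> h)) (at x)"
    and g2_grad: "\<And>x. (f2 has_derivative (\<lambda>h. g2 x \<bullet> h)) (at x)"
    and L1_pos: "L1 > 0" and L2_pos: "L2 > 0"
    and g1_lip: "L1-lipschitz_on UNIV g1" and g2_lip: "L2-lipschitz_on UNIV g2"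
    and f3_proper: "proper_fun f3" and f3_lsc: "lsc_fun f3"
    and minimizer: "\<exists>xs. \<forall>y. ereal (f1 xs + f2 xs) + f3 xs \<le> ereal (f1 y + f2 y) + f3 y"
    and gamma_pos: "\<gamma> > 0" and gamma_bound: "\<gamma> < 1 / (L1 + L2)"
    and alpha_pos: "\<alpha> > 0"
    and x1_def: "x1 \<in> prox_set (\<lambda>x. ereal (f1 x)) \<gamma> z1"
    and x2_def: "x2 \<in> prox_set (\<lambda>x. ereal (f2 x)) (\<gamma> / \<alpha>) (z2 /\<^sub>R \<alpha> + x1)"
    and x3_def: "x3 \<in> prox_set f3 \<gamma> (x1 - z1 + x2 - z2)"
  shows "ryu_env f1 f2 f3 g1 g2 \<gamma> \<alpha> x1 x2
           \<le> min (ereal (f1 x1 + f2 x1) + f3 x1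
                   + ereal (1/2 * (L2 + (1 - \<alpha>) / \<gamma>) * (norm (x1 - x2))\<^sup>2))
                 (ereal (f1 x2 + f2 x2) + f3 x2
                   + ereal (1/2 * (L1 + \<alpha> / \<gamma>) * (norm (x1 - x2))\<^sup>2))
       \<and> ryu_env f1 f2 f3 g1 g2 \<gamma> \<alpha> x1 x2
           \<ge> ereal (f1 x3 + f2 x3) + f3 x3
             + ereal ((\<alpha> - \<gamma> * L1) / (2 * \<gamma>) * (norm (x3 - x1))\<^sup>2
                      + ((1 - \<alpha>) - \<gamma> * L2) / (2 * \<gamma>) * (norm (x3 - x2))\<^sup>2)
       \<and> ((\<alpha> < 1 \<and> \<gamma> \<le> min (\<alpha> / L1) ((1 - \<alpha>) / L2))
           \<longrightarrow> ryu_env f1 f2 f3 g1 g2 \<gamma> \<alpha> x1 x2 \<ge> ereal (f1 x3 + f2 x3) + f3 x3)"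
proof -
  define R where "R = (\<alpha> - \<gamma> * L1) / (2 * \<gamma>) * (norm (x3 - x1))\<^sup>2
                      + ((1 - \<alpha>) - \<gamma> * L2) / (2 * \<gamma>) * (norm (x3 - x2))\<^sup>2"
  have R_eq: "R = (\<alpha> / \<gamma> - L1) / 2 * (norm (x3 - x1))\<^sup>2 + ((1 - \<alpha>) / \<gamma> - L2) / 2 * (norm (x3 - x2))\<^sup>2"
    using gamma_pos by (simp add: R_def field_simps)
  have "0 \<le> L1 * (norm (x1 - x2))\<^sup>2" "0 \<le> L2 * (norm (x1 - x2))\<^sup>2"
    using L1_pos L2_pos by simp_all
  then have "ryu_env f1 f2 f3 g1 g2 \<gamma> \<alpha> x1 x2
      \<le> ereal (f1 x1 + f2 x1) + f3 x1 + ereal (1/2 * (L2 + (1 - \<alpha>) / \<gamma>) * (norm (x1 - x2))\<^sup>2)"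
    and "ryu_env f1 f2 f3 g1 g2 \<gamma> \<alpha> x1 x2
      \<le> ereal (f1 x2 + f2 x2) + f3 x2 + ereal (1/2 * (L1 + \<alpha> / \<gamma>) * (norm (x1 - x2))\<^sup>2)"
    by (intro order_trans[OF ryu_env_le_at_first_point[OF g2_grad f2_convex]]
          order_trans[OF ryu_env_le_at_second_point[OF g1_grad f1_convex]] add_left_mono;
        simp add: algebra_simps add_divide_distrib)+
  moreover have lower: "ereal (f1 x3 + f2 x3) + f3 x3 + ereal R \<le> ryu_env f1 f2 f3 g1 g2 \<gamma> \<alpha> x1 x2"
    unfolding R_eq
    by (rule ryu_env_ge_at_prox[OF g1_grad g2_grad g1_lip g2_lip gamma_pos alpha_pos x1_def x2_def x3_def])
  moreover have "ereal (f1 x3 + f2 x3) + f3 x3 \<le> ryu_env f1 f2 f3 g1 g2 \<gamma> \<alpha> x1 x2"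
    if "\<alpha> < 1 \<and> \<gamma> \<le> min (\<alpha> / L1) ((1 - \<alpha>) / L2)"
  proof -
    have "\<gamma> * L1 \<le> \<alpha>" "\<gamma> * L2 \<le> 1 - \<alpha>"
      using that L1_pos L2_pos by (simp_all add: field_simps)
    then have "0 \<le> R"
      unfolding R_def using gamma_pos by (intro add_nonneg_nonneg mult_nonneg_nonneg divide_nonneg_pos) auto
    then show ?thesis
      using order_trans[OF add_increasing2[of "ereal R"] lower] by simp
  qed
  ultimately show ?thesis
    unfolding R_def by auto
qed

end
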